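(* Let $r$ and $k$ be odd positive integers such that $2^{\alpha}k\in G_r$ for all nonnegative integers $\alpha$, and let $k_1,k_2$ be relatively prime positive integers with $k_1k_2=k$. Then either $2^{\alpha}k_1\in G_r$ for all nonnegative integers $\alpha$, or $2^{\alpha}k_2\in G_r$ for all nonnegative integers $\alpha$.
   Context: For a positive integer $r$, the $r$-th Schemmel totient function $S_r:\mathbb{N}\to\mathbb{N}_0$ is the multiplicative arithmetic function (so $S_r(1)=1$ and $S_r(ab)=S_r(a)S_r(b)$ for coprime $a,b$) defined on prime powers by $S_r(p^{\alpha})=0$ if $p\le r$ and $S_r(p^\alpha)=p^{\alpha-1}(p-r)$ if $p>r$, for all primes $p$ and positive integers $\alpha$. $G_r$ denotes the set of positive integers not in the range of $S_r$. *)

theory Defs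
  imports "HOL-Computational_Algebra.Primes"
begin

(* r-th Schemmel totient: multiplicative, S_r(p^a) = 0 if p <= r, p^(a-1)(p-r) if p > r.
   Only meaningful on positive integers; value at 0 is irrelevant. *)
definition schemmel :: "nat \<Rightarrow> nat \<Rightarrow> nat" where
  "schemmel r n = (\<Prod>p\<in>prime_factors n.
      (if p \<le> r then 0 else p ^ (multiplicity p n - 1) * (p - r)))"

definition G :: "nat \<Rightarrow> nat set" where
  "G r = {m. m > 0 \<and> \<not> (\<exists>n>0. schemmel r n = m)}"

end

theory Submission
  imports Defs
begin

text \<open>Suppose \<open>S_r(n1) = 2^a1 k1\<close> and \<open>S_r(n2) = 2^a2 k2\<close>. If \<open>n1, n2\<close> are coprime, then
  \<open>S_r(n1 n2) = 2^(a1+a2) k\<close>. Otherwise they share a prime \<open>p > r\<close>, whose prime-power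
  factors contribute \<open>p^(e_i-1) (p - r)\<close> to the two values. The odd part of \<open>p - r\<close>
  divides the coprime numbers \<open>k1, k2\<close>, so \<open>p - r\<close> is a power of two; an odd \<open>p\<close> cannot
  divide both values either, so one of the two contributions is a power of two and can be
  removed from its side. Induction on \<open>n1 + n2\<close> produces \<open>n\<close> with \<open>S_r(n) = 2^a k\<close>.\<close>

lemma multiplicity_mult_not_dvd:
  fixes a b p :: nat
  assumes "prime p" "\<not> p dvd b" "a > 0" "b > 0"
  shows "multiplicity p (a * b) = multiplicity p a"
  using assms by (simp add: prime_elem_multiplicity_mult_distrib not_dvd_imp_multiplicity_0)

lemma schemmel_mult:
  assumes "coprime a b" "a > 0" "b > 0"
  shows "schemmel r (a * b) = schemmel r a * schemmel r b"
proof -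
  define f where "f n p = (if p \<le> r then 0 else p ^ (multiplicity p n - 1) * (p - r))" for n p
  have disjoint: "prime_factors a \<inter> prime_factors b = {}"
    using assms(1) by (auto dest: coprime_common_divisor simp: in_prime_factors_iff)
  have "schemmel r (a * b) = (\<Prod>p\<in>prime_factors a \<union> prime_factors b. f (a * b) p)"
    using assms(2,3) by (simp add: schemmel_def f_def prime_factors_product)
  also have "\<dots> = (\<Prod>p\<in>prime_factors a. f (a * b) p) * (\<Prod>p\<in>prime_factors b. f (a * b) p)"
    using disjoint by (simp add: prod.union_disjoint)
  also have "(\<Prod>p\<in>prime_factors a. f (a * b) p) = (\<Prod>p\<in>prime_factors a. f a p)"
  proof (rule prod.cong[OF refl])
    fix p assume p: "p \<in> prime_factors a"
    then have "\<not> p dvd b"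
      using disjoint assms(3) by (auto simp: in_prime_factors_iff)
    with p assms(2,3) show "f (a * b) p = f a p"
      by (simp add: f_def multiplicity_mult_not_dvd in_prime_factors_iff)
  qed
  also have "(\<Prod>p\<in>prime_factors b. f (a * b) p) = (\<Prod>p\<in>prime_factors b. f b p)"
  proof (rule prod.cong[OF refl])
    fix p assume p: "p \<in> prime_factors b"
    then have "\<not> p dvd a"
      using disjoint assms(2) by (auto simp: in_prime_factors_iff)
    with p assms(2,3) show "f (a * b) p = f b p"
      by (subst mult.commute) (simp add: f_def multiplicity_mult_not_dvd in_prime_factors_iff)
  qed
  finally show ?thesis
    by (simp add: schemmel_def f_def)
qed

lemma schemmel_prime_power:
  assumes "prime p" "e > 0"
  shows "schemmel r (p ^ e) = (if p \<le> r then 0 else p ^ (e - 1) * (p - r))"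
  using assms by (simp add: schemmel_def prime_factorization_prime_power)

lemma schemmel_split_prime_power:
  assumes "prime p" "p dvd n" "n > 0"
  obtains e m where "e > 0" "n = p ^ e * m" "0 < m" "m < n"
    "schemmel r n = schemmel r (p ^ e) * schemmel r m"
proof -
  define e where "e = multiplicity p n"
  obtain m where m: "n = p ^ e * m" "\<not> p dvd m"
    using multiplicity_decompose'[of n p] assms(1,3) unfolding e_def
    by (metis not_prime_unit gr_implies_not0)
  have "e > 0"
    using assms by (simp add: e_def prime_multiplicity_gt_zero_iff)
  have "0 < m"
    using m(1) assms(3) by (cases m) auto
  have "1 < p ^ e"
    using one_less_power[OF prime_gt_1_nat[OF assms(1)] \<open>e > 0\<close>] .
  then have "m < n"
    using m(1) \<open>0 < m\<close> by simp
  have "coprime (p ^ e) m"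
    using m(2) assms(1) prime_imp_power_coprime coprime_commute by blast
  then have "schemmel r n = schemmel r (p ^ e) * schemmel r m"
    using schemmel_mult m(1) \<open>0 < m\<close> \<open>1 < p ^ e\<close> by (metis zero_less_one order.strict_trans)
  with that \<open>e > 0\<close> m(1) \<open>0 < m\<close> \<open>m < n\<close> show ?thesis
    by blast
qed

lemma odd_common_divisor_eq_1:
  fixes q k1 k2 :: nat
  assumes "odd q" "coprime k1 k2" "q dvd 2 ^ a1 * k1" "q dvd 2 ^ a2 * k2"
  shows "q = 1"
proof -
  have "q dvd k1" "q dvd k2"
    using assms by (simp_all add: coprime_dvd_mult_right_iff)
  then show ?thesis
    using assms(2) coprime_common_divisor_nat by blast
qed

lemma prime_power_contribution_pow2:
  fixes p r k1 k2 :: nat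
  assumes "prime p" "r < p" "coprime k1 k2"
    and dvd1: "p ^ (e1 - 1) * (p - r) dvd 2 ^ a1 * k1"
    and dvd2: "p ^ (e2 - 1) * (p - r) dvd 2 ^ a2 * k2"
  shows "(\<exists>t. p ^ (e1 - 1) * (p - r) = 2 ^ t) \<or> (\<exists>t. p ^ (e2 - 1) * (p - r) = 2 ^ t)"
proof -
  define u where "u = multiplicity 2 (p - r)"
  obtain q where q: "p - r = 2 ^ u * q" "odd q"
    using multiplicity_decompose'[of "p - r" 2] assms(2) unfolding u_def by auto
  have "q dvd p ^ (e1 - 1) * (p - r)" "q dvd p ^ (e2 - 1) * (p - r)"
    unfolding q(1) by simp_all
  then have "q = 1"
    using odd_common_divisor_eq_1[OF q(2) assms(3) dvd_trans dvd_trans] dvd1 dvd2 by blast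
  then have u: "p - r = 2 ^ u"
    using q(1) by simp
  show ?thesis
  proof (cases "p = 2 \<or> e1 - 1 = 0 \<or> e2 - 1 = 0")
    case True
    with u show ?thesis
      by (auto simp flip: power_add)
  next
    case False
    then have "2 < p"
      using prime_ge_2_nat[OF assms(1)] by linarith
    then have "odd p"
      using assms(1) by (simp add: prime_odd_nat)
    have "p dvd p ^ (e1 - 1) * (p - r)" "p dvd p ^ (e2 - 1) * (p - r)"
      using False by simp_all
    then have "p = 1"
      using odd_common_divisor_eq_1[OF \<open>odd p\<close> assms(3) dvd_trans dvd_trans] dvd1 dvd2 by blast
    with assms(1) show ?thesis
      by simp
  qed
qed

lemma pow2_mult_odd_cancel:
  fixes x k :: nat
  assumes "2 ^ t * x = 2 ^ a * k" "odd k"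
  shows "x = 2 ^ (a - t) * k"
proof -
  have "t \<le> a"
  proof (rule ccontr)
    assume "\<not> t \<le> a"
    then have "2 ^ a * (2 ^ (t - a) * x) = 2 ^ a * k"
      using assms(1) by (simp flip: mult.assoc power_add)
    then have "k = 2 ^ (t - a) * x"
      by simp
    moreover have "2 dvd 2 ^ (t - a) * x"
      using \<open>\<not> t \<le> a\<close> by simp
    ultimately show False
      using assms(2) by simp
  qed
  then have "2 ^ t * x = 2 ^ t * (2 ^ (a - t) * k)"
    using assms(1) by (simp flip: mult.assoc power_add)
  then show ?thesis
    by simp
qed

lemma schemmel_remove_common_prime:
  fixes r k1 k2 n1 n2 :: nat
  assumes "odd k1" "odd k2" "coprime k1 k2" "n1 > 0" "n2 > 0" "\<not> coprime n1 n2"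
    and "schemmel r n1 = 2 ^ a1 * k1" "schemmel r n2 = 2 ^ a2 * k2"
  shows "\<exists>m1 m2 b1 b2. 0 < m1 \<and> 0 < m2 \<and> m1 + m2 < n1 + n2
           \<and> schemmel r m1 = 2 ^ b1 * k1 \<and> schemmel r m2 = 2 ^ b2 * k2"
proof -
  obtain p where p: "prime p" "p dvd n1" "p dvd n2"
    using assms(6) prime_factor_nat[of "gcd n1 n2"] by (auto simp: coprime_iff_gcd_eq_1)
  obtain e1 m1 where m1: "e1 > 0" "0 < m1" "m1 < n1"
      "schemmel r n1 = schemmel r (p ^ e1) * schemmel r m1"
    using schemmel_split_prime_power[OF p(1,2) assms(4)] by metis
  obtain e2 m2 where m2: "e2 > 0" "0 < m2" "m2 < n2"
      "schemmel r n2 = schemmel r (p ^ e2) * schemmel r m2"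
    using schemmel_split_prime_power[OF p(1,3) assms(5)] by metis
  have "r < p"
    using m1(4) assms(1,7) schemmel_prime_power[OF p(1) m1(1)] by (auto split: if_splits)
  then have v1: "schemmel r (p ^ e1) = p ^ (e1 - 1) * (p - r)"
    and v2: "schemmel r (p ^ e2) = p ^ (e2 - 1) * (p - r)"
    using schemmel_prime_power[OF p(1)] m1(1) m2(1) by auto
  have "p ^ (e1 - 1) * (p - r) dvd 2 ^ a1 * k1" "p ^ (e2 - 1) * (p - r) dvd 2 ^ a2 * k2"
    using m1(4) m2(4) assms(7,8) v1 v2 by (metis dvd_triv_left)+
  with prime_power_contribution_pow2[OF p(1) \<open>r < p\<close> assms(3)]
  consider t where "schemmel r (p ^ e1) = 2 ^ t" | t where "schemmel r (p ^ e2) = 2 ^ t"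
    unfolding v1 v2 by blast
  then show ?thesis
  proof cases
    case (1 t)
    then have "schemmel r m1 = 2 ^ (a1 - t) * k1"
      using m1(4) assms(1,7) by (simp add: pow2_mult_odd_cancel)
    with m1(2,3) assms(5,8) show ?thesis
      by (intro exI[of _ m1] exI[of _ n2] exI[of _ "a1 - t"] exI[of _ a2]) auto
  next
    case (2 t)
    then have "schemmel r m2 = 2 ^ (a2 - t) * k2"
      using m2(4) assms(2,8) by (simp add: pow2_mult_odd_cancel)
    with m2(2,3) assms(4,7) show ?thesis
      by (intro exI[of _ n1] exI[of _ m2] exI[of _ a1] exI[of _ "a2 - t"]) auto
  qed
qed

lemma schemmel_pow2_times_coprime_odd:
  fixes r k1 k2 :: nat
  assumes "odd k1" "odd k2" "coprime k1 k2"
  shows "n1 > 0 \<Longrightarrow> n2 > 0 \<Longrightarrow> schemmel r n1 = 2 ^ a1 * k1 \<Longrightarrow> schemmel r n2 = 2 ^ a2 * k2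
    \<Longrightarrow> \<exists>n a. n > 0 \<and> schemmel r n = 2 ^ a * (k1 * k2)"
proof (induction "n1 + n2" arbitrary: n1 n2 a1 a2 rule: less_induct)
  case less
  show ?case
  proof (cases "coprime n1 n2")
    case True
    then have "schemmel r (n1 * n2) = 2 ^ (a1 + a2) * (k1 * k2)"
      using less.prems by (simp add: schemmel_mult power_add ac_simps)
    with less.prems(1,2) show ?thesis
      by (intro exI[of _ "n1 * n2"] exI[of _ "a1 + a2"]) auto
  next
    case False
    then obtain m1 m2 b1 b2 where "0 < m1" "0 < m2" "m1 + m2 < n1 + n2"
        "schemmel r m1 = 2 ^ b1 * k1" "schemmel r m2 = 2 ^ b2 * k2"
      using schemmel_remove_common_prime[OF assms _ _ _ less.prems(3,4)] less.prems(1,2) by blast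
    then show ?thesis
      using less.hyps by blast
  qed
qed

theorem theorem3p4:
  fixes r k k1 k2 :: nat
  assumes "r > 0" and "odd r" and "k > 0" and "odd k"
    and "\<forall>\<alpha>::nat. 2 ^ \<alpha> * k \<in> G r"
    and "k1 > 0" and "k2 > 0" and "coprime k1 k2" and "k1 * k2 = k"
  shows "(\<forall>\<alpha>::nat. 2 ^ \<alpha> * k1 \<in> G r) \<or> (\<forall>\<alpha>::nat. 2 ^ \<alpha> * k2 \<in> G r)"
proof (rule ccontr)
  assume "\<not> ?thesis"
  then obtain a1 a2 n1 n2 where "n1 > 0" "schemmel r n1 = 2 ^ a1 * k1"
    and "n2 > 0" "schemmel r n2 = 2 ^ a2 * k2"
    using assms(6,7) by (auto simp: G_def)
  moreover have "odd k1" "odd k2"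
    using assms(4,9) by auto
  ultimately obtain n a where "n > 0" "schemmel r n = 2 ^ a * k"
    using schemmel_pow2_times_coprime_odd assms(8,9) by metis
  with assms(5) show False
    unfolding G_def by blast
qed

end
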